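(* Let $(H,\circ,N,\star,\boxdot)$ be a right skew bracoid, and for $h\in H$ let $\beta(h):N\to N$ be the map $\eta^{\beta(h)}=\overline{\eta}\star(\eta\boxdot h)\star\overline{(e_N\boxdot h)}$. Then for every $h\in H$ and $\mu,\eta\in N$: (1) $(\mu\star\eta)^{\beta(h)}=\overline{\eta}\star(\mu^{\beta(h)})\star\eta\star(\eta^{\beta(h)})$; (2) $e_N^{\beta(h)}=\eta^{\beta(e_H)}=e_N$; (3) $\overline{\eta}^{\beta(h)}=\eta\star\overline{(\eta^{\beta(h)})}\star\overline{\eta}$.
   Context: For a group $(N,\star)$, $e_N$ denotes its identity and $\overline{\eta}$ the inverse of $\eta$; $e_H$ is the identity of $(H,\circ)$. A right skew bracoid is a 5-tuple $(H,\circ,N,\star,\boxdot)$ where $(H,\circ)$ and $(N,\star)$ are groups and $\boxdot$ is a transitive right action of $(H,\circ)$ on the set $N$ such that $(\eta\star\mu)\boxdot h=(\eta\boxdot h)\star\overline{(e_N\boxdot h)}\star(\mu\boxdot h)$ for all $h\in H$, $\eta,\mu\in N$. *)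

theory Defs
  imports "HOL-Algebra.Group"
begin

definition right_action :: "('a, 'c) monoid_scheme \<Rightarrow> 'b set \<Rightarrow> ('b \<Rightarrow> 'a \<Rightarrow> 'b) \<Rightarrow> bool" where
  "right_action H S act \<longleftrightarrow>
     (\<forall>h \<in> carrier H. \<forall>x \<in> S. act x h \<in> S) \<and>
     (\<forall>x \<in> S. act x \<one>\<^bsub>H\<^esub> = x) \<and>
     (\<forall>g \<in> carrier H. \<forall>h \<in> carrier H. \<forall>x \<in> S. act (act x g) h = act x (g \<otimes>\<^bsub>H\<^esub> h))"

definition transitive_right_action :: "('a, 'c) monoid_scheme \<Rightarrow> 'b set \<Rightarrow> ('b \<Rightarrow> 'a \<Rightarrow> 'b) \<Rightarrow> bool" where
  "transitive_right_action H S act \<longleftrightarrow> right_action H S act \<and>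
     (\<forall>x \<in> S. \<forall>y \<in> S. \<exists>h \<in> carrier H. act x h = y)"

definition right_skew_bracoid :: "('a, 'c) monoid_scheme \<Rightarrow> ('b, 'd) monoid_scheme \<Rightarrow> ('b \<Rightarrow> 'a \<Rightarrow> 'b) \<Rightarrow> bool" where
  "right_skew_bracoid H N act \<longleftrightarrow> group H \<and> group N \<and>
     transitive_right_action H (carrier N) act \<and>
     (\<forall>h \<in> carrier H. \<forall>x \<in> carrier N. \<forall>y \<in> carrier N.
        act (x \<otimes>\<^bsub>N\<^esub> y) h = act x h \<otimes>\<^bsub>N\<^esub> inv\<^bsub>N\<^esub> (act \<one>\<^bsub>N\<^esub> h) \<otimes>\<^bsub>N\<^esub> act y h)"

definition bracoid_beta :: "('b, 'd) monoid_scheme \<Rightarrow> ('b \<Rightarrow> 'a \<Rightarrow> 'b) \<Rightarrow> 'a \<Rightarrow> 'b \<Rightarrow> 'b" where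
  "bracoid_beta N act h x = inv\<^bsub>N\<^esub> x \<otimes>\<^bsub>N\<^esub> act x h \<otimes>\<^bsub>N\<^esub> inv\<^bsub>N\<^esub> (act \<one>\<^bsub>N\<^esub> h)"

end

theory Submission
  imports Defs
begin

(* For fixed h the compatibility axiom says exactly that phi(x) = (x . h) * inv (e_N . h) is a group
   endomorphism of N, and beta(h) is x |-> inv x * phi(x). Identities (1) and (3) hold for
   x |-> inv x * phi(x) with any endomorphism phi. *)

lemma (in group) inv_mult_endo_mult:
  assumes \<phi>: "\<phi> \<in> hom G G" and x: "x \<in> carrier G" and y: "y \<in> carrier G"
  shows "inv (x \<otimes> y) \<otimes> \<phi> (x \<otimes> y) = inv y \<otimes> (inv x \<otimes> \<phi> x) \<otimes> y \<otimes> (inv y \<otimes> \<phi> y)"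
proof -
  have \<phi>x: "\<phi> x \<in> carrier G" and \<phi>y: "\<phi> y \<in> carrier G"
    using \<phi> x y by (auto simp: hom_def)
  have "inv (x \<otimes> y) \<otimes> \<phi> (x \<otimes> y) = inv y \<otimes> inv x \<otimes> (\<phi> x \<otimes> \<phi> y)"
    using \<phi> x y by (simp add: inv_mult_group hom_mult)
  also have "\<dots> = inv y \<otimes> (inv x \<otimes> \<phi> x) \<otimes> y \<otimes> (inv y \<otimes> \<phi> y)"
    using x y \<phi>x \<phi>y by (simp add: m_assoc flip: m_assoc[of y "inv y"])
  finally show ?thesis .
qed

lemma (in group) inv_mult_endo_inv:
  assumes \<phi>: "\<phi> \<in> hom G G" and x: "x \<in> carrier G"
  shows "inv (inv x) \<otimes> \<phi> (inv x) = x \<otimes> inv (inv x \<otimes> \<phi> x) \<otimes> inv x"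
proof -
  interpret group_hom G G \<phi> using \<phi> by unfold_locales
  show ?thesis
    using x by (simp add: inv_mult_group m_assoc)
qed

lemma right_skew_bracoid_act_closed:
  assumes "right_skew_bracoid H N act" and "h \<in> carrier H" and "x \<in> carrier N"
  shows "act x h \<in> carrier N"
  using assms unfolding right_skew_bracoid_def transitive_right_action_def right_action_def
  by blast

lemma right_skew_bracoid_endo:
  assumes "right_skew_bracoid H N act" and "h \<in> carrier H"
  shows "(\<lambda>x. act x h \<otimes>\<^bsub>N\<^esub> inv\<^bsub>N\<^esub> (act \<one>\<^bsub>N\<^esub> h)) \<in> hom N N"
proof -
  interpret N: group N
    using assms(1) by (simp add: right_skew_bracoid_def)
  have closed: "\<And>x. x \<in> carrier N \<Longrightarrow> act x h \<in> carrier N"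
    using assms by (rule right_skew_bracoid_act_closed)
  have compat: "\<And>x y. x \<in> carrier N \<Longrightarrow> y \<in> carrier N \<Longrightarrow>
      act (x \<otimes>\<^bsub>N\<^esub> y) h = act x h \<otimes>\<^bsub>N\<^esub> inv\<^bsub>N\<^esub> (act \<one>\<^bsub>N\<^esub> h) \<otimes>\<^bsub>N\<^esub> act y h"
    using assms unfolding right_skew_bracoid_def by blast
  show ?thesis
    by (rule homI) (simp_all add: closed compat N.m_assoc)
qed

lemma bracoid_beta_eq_inv_mult_endo:
  assumes "group N" and "x \<in> carrier N" and "act x h \<in> carrier N" and "act \<one>\<^bsub>N\<^esub> h \<in> carrier N"
  shows "bracoid_beta N act h x = inv\<^bsub>N\<^esub> x \<otimes>\<^bsub>N\<^esub> (act x h \<otimes>\<^bsub>N\<^esub> inv\<^bsub>N\<^esub> (act \<one>\<^bsub>N\<^esub> h))"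
proof -
  interpret N: group N by fact
  show ?thesis
    using assms(2-) by (simp add: bracoid_beta_def N.m_assoc)
qed

lemma bracoid_beta_unit:
  assumes "right_skew_bracoid H N act" and "x \<in> carrier N"
  shows "bracoid_beta N act \<one>\<^bsub>H\<^esub> x = \<one>\<^bsub>N\<^esub>"
proof -
  interpret N: group N
    using assms(1) by (simp add: right_skew_bracoid_def)
  have "\<forall>y \<in> carrier N. act y \<one>\<^bsub>H\<^esub> = y"
    using assms(1) unfolding right_skew_bracoid_def transitive_right_action_def right_action_def
    by blast
  then show ?thesis
    using assms(2) by (simp add: bracoid_beta_def)
qed

theorem lemma2p8:
  fixes H :: "('a, 'c) monoid_scheme" and N :: "('b, 'd) monoid_scheme"
    and act :: "'b \<Rightarrow> 'a \<Rightarrow> 'b"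
  assumes "right_skew_bracoid H N act"
    and "h \<in> carrier H" and "mu \<in> carrier N" and "eta \<in> carrier N"
  shows "(bracoid_beta N act h (mu \<otimes>\<^bsub>N\<^esub> eta)
           = inv\<^bsub>N\<^esub> eta \<otimes>\<^bsub>N\<^esub> bracoid_beta N act h mu \<otimes>\<^bsub>N\<^esub> eta
               \<otimes>\<^bsub>N\<^esub> bracoid_beta N act h eta)
         \<and> (bracoid_beta N act h \<one>\<^bsub>N\<^esub> = \<one>\<^bsub>N\<^esub>
              \<and> bracoid_beta N act \<one>\<^bsub>H\<^esub> eta = \<one>\<^bsub>N\<^esub>)
         \<and> (bracoid_beta N act h (inv\<^bsub>N\<^esub> eta)
           = eta \<otimes>\<^bsub>N\<^esub> inv\<^bsub>N\<^esub> (bracoid_beta N act h eta) \<otimes>\<^bsub>N\<^esub> inv\<^bsub>N\<^esub> eta)"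
proof -
  interpret N: group N
    using assms(1) by (simp add: right_skew_bracoid_def)
  define \<phi> where "\<phi> x = act x h \<otimes>\<^bsub>N\<^esub> inv\<^bsub>N\<^esub> (act \<one>\<^bsub>N\<^esub> h)" for x
  have \<phi>: "\<phi> \<in> hom N N"
    unfolding \<phi>_def using assms(1,2) by (rule right_skew_bracoid_endo)
  then interpret \<phi>: group_hom N N \<phi>
    by unfold_locales
  have \<beta>: "bracoid_beta N act h x = inv\<^bsub>N\<^esub> x \<otimes>\<^bsub>N\<^esub> \<phi> x" if "x \<in> carrier N" for x
    unfolding \<phi>_def using that
    by (simp add: bracoid_beta_eq_inv_mult_endo right_skew_bracoid_act_closed[OF assms(1,2)] N.is_group)
  show ?thesis
    using N.inv_mult_endo_mult[OF \<phi> assms(3,4)] N.inv_mult_endo_inv[OF \<phi> assms(4)]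
      bracoid_beta_unit[OF assms(1,4)] assms(3,4)
    by (simp add: \<beta>)
qed

end
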